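(* Let $\nu_0\approx 19.6203$ be the positive root of the equation $\sqrt{\pi}\,\Gamma(\nu+3/2) = 8\,\Gamma(\nu+1)$, and let $\nu\ge\nu_0$. Let $$\mathcal{B}_{\nu}(z)= \sum_{n=0}^\infty \frac{ \Gamma(\nu+1)\,\Gamma\!\left(\frac{n+1}{2}\right)}{\sqrt{\pi}\, n!\, \Gamma\!\left(\frac{n}{2}+\nu+1\right)}\, z^n ,\qquad z\in\mathbb{D}=\{z\in\mathbb{C}:|z|<1\}.$$ Then the function $f(z)=z\mathcal{B}_\nu(z)$ is close-to-convex with respect to the starlike function $g(z)=z/(1-z^2)$.
   Context: $\mathcal{B}_\nu$ is the Bessel–Struve kernel function; $f(z)=z\mathcal{B}_\nu(z)$ satisfies $f(0)=0$, $f'(0)=1$. Given a starlike function $g$ (univalent in $\mathbb{D}$ with $g(\mathbb{D})$ starlike with respect to $0$), an analytic $f$ on $\mathbb{D}$ with $f(0)=0$, $f'(0)=1$ is close-to-convex with respect to $g$ if there exists a real $\beta$ such that $\operatorname{Re}\left(e^{i\beta}\, z f'(z)/g(z)\right)>0$ for all $z\in\mathbb{D}$. *)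

theory Defs
  imports "HOL-Complex_Analysis.Complex_Analysis"
begin

abbreviation unit_disc :: "complex set" where
  "unit_disc \<equiv> ball 0 1"

definition bs_coeff :: "real \<Rightarrow> nat \<Rightarrow> real" where
  "bs_coeff \<nu> n = Gamma (\<nu> + 1) * Gamma ((real n + 1) / 2)
      / (sqrt pi * fact n * Gamma (real n / 2 + \<nu> + 1))"

definition bessel_struve_kernel :: "real \<Rightarrow> complex \<Rightarrow> complex" where
  "bessel_struve_kernel \<nu> z = (\<Sum>n. complex_of_real (bs_coeff \<nu> n) * z ^ n)"

definition starlike_fun :: "(complex \<Rightarrow> complex) \<Rightarrow> bool" where
  "starlike_fun g \<longleftrightarrow>
     g holomorphic_on unit_disc \<and> inj_on g unit_disc \<and> g 0 = 0 \<and>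
     (\<forall>w \<in> g ` unit_disc. closed_segment 0 w \<subseteq> g ` unit_disc)"

text \<open>The quotient z f'(z)/g(z), extended to z = 0 by its limit f'(0)/g'(0).\<close>
definition ctc_quotient :: "(complex \<Rightarrow> complex) \<Rightarrow> (complex \<Rightarrow> complex) \<Rightarrow> complex \<Rightarrow> complex" where
  "ctc_quotient f g z = (if z = 0 then deriv f 0 / deriv g 0 else z * deriv f z / g z)"

definition close_to_convex_wrt :: "(complex \<Rightarrow> complex) \<Rightarrow> (complex \<Rightarrow> complex) \<Rightarrow> bool" where
  "close_to_convex_wrt f g \<longleftrightarrow>
     starlike_fun g \<and> f holomorphic_on unit_disc \<and> f 0 = 0 \<and> deriv f 0 = 1 \<and>
     (\<exists>\<beta>::real. \<forall>z \<in> unit_disc. Re (cis \<beta> * ctc_quotient f g z) > 0)"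

end

theory Submission
  imports Defs
begin

text \<open>
  Log-convexity of \<open>\<Gamma>\<close> gives \<open>\<Gamma>(x + 1/2)\<^sup>2 \<le> x \<Gamma>(x)\<^sup>2\<close>, which forces \<open>\<nu>\<^sub>0 \<ge> 19\<close>.
  For \<open>g(z) = z/(1 - z\<^sup>2)\<close> and \<open>f(z) = \<Sum> b\<^sub>n z\<^sup>n\<^sup>+\<^sup>1\<close> the quotient \<open>z f'(z)/g(z)\<close> is
  \<open>\<Sum> (n+1) b\<^sub>n z\<^sup>n (1 - z\<^sup>2)\<close>, and on the closed disc
  \<open>Re (z\<^sup>n (1 - z\<^sup>2)) \<ge> -(n+1) Re (1 - z\<^sup>2)\<close> (write \<open>z = r e\<^sup>i\<^sup>t\<close> and use \<open>|sin (n+1)t| \<le> (n+1) |sin t|\<close>).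
  Hence the real part of the quotient is at least \<open>(2 b\<^sub>0 - \<Sum> (n+1)\<^sup>2 b\<^sub>n) Re (1 - z\<^sup>2)\<close>, which is
  positive because the recursion \<open>b\<^sub>n\<^sub>+\<^sub>2 = b\<^sub>n / ((n+2)(n+2+2\<nu>))\<close> makes \<open>(n+1)\<^sup>2 b\<^sub>n \<le> (12/5) 4\<^sup>-\<^sup>n\<close>
  for \<open>n \<ge> 1\<close>. Starlikeness of \<open>g\<close>: \<open>g(u) = w\<close> means \<open>u\<^sup>2 + u/w = 1\<close>, whose roots have
  product \<open>-1\<close>, so one of them lies in the disc unless both lie on the circle, which happens only
  for imaginary \<open>w\<close> of modulus at least \<open>1/2\<close>, never of the form \<open>t g(z)\<close> with \<open>|z| < 1\<close>, \<open>0 < t \<le> 1\<close>.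
\<close>

lemma abs_sin_of_nat_mult_le: "\<bar>sin (real n * x)\<bar> \<le> real n * \<bar>sin x\<bar>"
proof (induction n)
  case 0 then show ?case by simp
next
  case (Suc n)
  have "\<bar>sin (real (Suc n) * x)\<bar> = \<bar>sin (real n * x + x)\<bar>" by (simp add: algebra_simps)
  also have "\<dots> = \<bar>sin (real n * x) * cos x + cos (real n * x) * sin x\<bar>" by (simp only: sin_add)
  also have "\<dots> \<le> \<bar>sin (real n * x)\<bar> + \<bar>sin x\<bar>"
    by (rule order_trans[OF abs_triangle_ineq add_mono])
       (auto simp: abs_mult intro: mult_left_le mult_left_le_one_le)
  also have "\<dots> \<le> real (Suc n) * \<bar>sin x\<bar>" using Suc by (simp add: algebra_simps)
  finally show ?case .
qed

lemma Re_power_mult_one_minus_sq_ge: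
  fixes z :: complex
  assumes "norm z \<le> 1"
  shows "Re (z ^ n * (1 - z\<^sup>2)) \<ge> - ((real n + 1) * Re (1 - z\<^sup>2))"
proof -
  define r where "r = norm z"
  define t where "t = Arg z"
  define S where "S = sin ((real n + 1) * t)"
  define B where "B = (1 - r\<^sup>2) + 2 * r\<^sup>2 * ((real n + 1) * (sin t)\<^sup>2)"
  have r: "0 \<le> r" "r \<le> 1" using assms by (auto simp: r_def)
  have rn: "0 \<le> r ^ n" "r ^ n \<le> 1" and r2: "0 \<le> r\<^sup>2" "r\<^sup>2 \<le> 1"
    using r by (auto intro: power_le_one)
  have Re_pow: "Re (z ^ k) = r ^ k * cos (real k * t)" for k
  proof -
    have "z ^ k = rcis r t ^ k" by (simp add: r_def t_def rcis_cmod_Arg)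
    then show ?thesis by (simp add: DeMoivre2)
  qed
  have cos_n2: "cos ((real n + 2) * t) = cos (real n * t) - 2 * S * sin t"
  proof -
    have "cos ((real n + 2) * t) = cos ((real n + 1) * t + t)"
      and "cos (real n * t) = cos ((real n + 1) * t - t)" by (simp_all add: algebra_simps)
    then show ?thesis by (simp add: S_def cos_add cos_diff)
  qed
  have lhs: "Re (z ^ n * (1 - z\<^sup>2)) = r ^ n * ((1 - r\<^sup>2) * cos (real n * t) + 2 * r\<^sup>2 * (S * sin t))"
  proof -
    have "Re (z ^ n * (1 - z\<^sup>2)) = Re (z ^ n) - Re (z ^ (n + 2))"
      by (simp add: algebra_simps power_add power2_eq_square)
    also have "\<dots> = r ^ n * cos (real n * t) - r ^ (n + 2) * cos ((real n + 2) * t)"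
      by (simp only: Re_pow of_nat_add of_nat_numeral)
    also have "\<dots> = r ^ n * ((1 - r\<^sup>2) * cos (real n * t) + 2 * r\<^sup>2 * (S * sin t))"
      unfolding cos_n2 by (simp add: power_add power2_eq_square algebra_simps)
    finally show ?thesis .
  qed
  have rhs: "(real n + 1) * Re (1 - z\<^sup>2) = (real n + 1) * (1 - r\<^sup>2) + 2 * r\<^sup>2 * ((real n + 1) * (sin t)\<^sup>2)"
  proof -
    have "Re (1 - z\<^sup>2) = 1 - r\<^sup>2 * (1 - 2 * (sin t)\<^sup>2)"
      using Re_pow[of 2] cos_double_sin[of t] by (simp add: mult.commute)
    then show ?thesis by (simp only:) (simp add: algebra_simps)
  qed
  have "\<bar>S * sin t\<bar> \<le> (real n + 1) * (sin t)\<^sup>2"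
    using mult_right_mono[OF abs_sin_of_nat_mult_le[of "Suc n" t] abs_ge_zero[of "sin t"]]
    by (simp add: S_def abs_mult power2_eq_square add_ac)
  then have "2 * r\<^sup>2 * (S * sin t) \<ge> - (2 * r\<^sup>2 * ((real n + 1) * (sin t)\<^sup>2))"
    using r2 mult_left_mono[of "- ((real n + 1) * (sin t)\<^sup>2)" "S * sin t" "2 * r\<^sup>2"] by simp
  moreover have "(1 - r\<^sup>2) * cos (real n * t) \<ge> - (1 - r\<^sup>2)"
    using r2 mult_left_mono[of "-1" "cos (real n * t)" "1 - r\<^sup>2"] by simp
  ultimately have X: "(1 - r\<^sup>2) * cos (real n * t) + 2 * r\<^sup>2 * (S * sin t) \<ge> - B"
    unfolding B_def by linarith
  have "B \<ge> 0" using r2 by (simp add: B_def)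
  have "B \<le> (real n + 1) * Re (1 - z\<^sup>2)"
    unfolding rhs B_def using r2 mult_nonneg_nonneg[of "real n" "1 - r\<^sup>2"] by (simp add: algebra_simps)
  then have "- ((real n + 1) * Re (1 - z\<^sup>2)) \<le> - B" by simp
  also have "\<dots> \<le> - (r ^ n * B)"
    using mult_left_le_one_le[OF \<open>B \<ge> 0\<close> rn] by simp
  also have "\<dots> \<le> Re (z ^ n * (1 - z\<^sup>2))"
    using mult_left_mono[OF X rn(1)] unfolding lhs by simp
  finally show ?thesis .
qed

lemma one_minus_sq_nonzero:
  fixes z :: complex
  assumes "norm z < 1"
  shows "1 - z\<^sup>2 \<noteq> 0"
proof -
  have "norm (z\<^sup>2) < 1" using assms by (simp add: norm_power power_less_one_iff)
  then show ?thesis by auto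
qed

lemma norm_inverse_minus_gt_two:
  fixes z :: complex
  assumes "0 < norm z" "norm z < 1" and "Re (1 / z - z) = 0"
  shows "norm (1 / z - z) > 2"
proof -
  have "Re z * (1 / (norm z)\<^sup>2 - 1) = 0"
    using assms(3) by (simp add: Re_divide cmod_power2 algebra_simps)
  moreover have "1 / (norm z)\<^sup>2 - 1 > 0" using assms by (simp add: power_less_one_iff)
  ultimately have "Re z = 0" by (metis less_numeral_extra(3) mult_eq_0_iff)
  then have z: "z = \<i> * of_real (Im z)" by (simp add: complex_eq_iff)
  define x where "x = \<bar>Im z\<bar>"
  have "norm z = x" by (subst z) (simp add: norm_mult x_def)
  then have x: "0 < x" "x < 1" using assms by auto
  have "Im z \<noteq> 0" using x by (auto simp: x_def)
  then have "1 / z - z = - \<i> * of_real (1 / Im z + Im z)"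
    by (subst (1 2) z) (simp add: field_simps)
  then have "norm (1 / z - z) = \<bar>1 / Im z + Im z\<bar>"
    by (simp only: norm_mult norm_minus_cancel norm_ii norm_of_real mult_1)
  also have "\<dots> = 1 / x + x"
    using \<open>Im z \<noteq> 0\<close> by (cases "Im z > 0") (auto simp: x_def abs_of_neg add_neg_neg)
  finally have "norm (1 / z - z) = 1 / x + x" .
  moreover have "(1 - x)\<^sup>2 > 0" using x by simp
  then have "1 / x + x > 2" using x by (simp add: field_simps power2_eq_square)
  ultimately show ?thesis by simp
qed

lemma quadratic_root_in_unit_disc:
  fixes p :: complex
  assumes "Re p \<noteq> 0 \<or> norm p > 2"
  shows "\<exists>u. norm u < 1 \<and> u\<^sup>2 + p * u = 1"
proof (rule ccontr)
  assume no_root: "\<not> ?thesis"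
  define d where "d = csqrt (p\<^sup>2 + 4)"
  define u where "u = (d - p) / 2"
  define v where "v = (- d - p) / 2"
  have d2: "d\<^sup>2 = p\<^sup>2 + 4" by (simp add: d_def)
  have "u\<^sup>2 + p * u - 1 = (d\<^sup>2 - (p\<^sup>2 + 4)) / 4" "v\<^sup>2 + p * v - 1 = (d\<^sup>2 - (p\<^sup>2 + 4)) / 4"
    and "u * v + 1 = - (d\<^sup>2 - (p\<^sup>2 + 4)) / 4"
    by (simp_all add: u_def v_def field_simps power2_eq_square)
  then have roots: "u\<^sup>2 + p * u = 1" "v\<^sup>2 + p * v = 1" and "u * v = -1"
    unfolding d2 by (simp_all add: algebra_simps eq_neg_iff_add_eq_0)
  then have "norm u * norm v = 1" by (simp flip: norm_mult)
  moreover have "norm u \<ge> 1" "norm v \<ge> 1" using no_root roots by (auto simp: not_less)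
  ultimately have u1: "norm u = 1"
    using mult_left_mono[of 1 "norm v" "norm u"] by simp
  \<comment> \<open>a root on the unit circle forces \<open>p = cnj u - u\<close>\<close>
  then have "u \<noteq> 0" and "u * cnj u = 1"
    by (auto simp flip: complex_norm_square)
  then have "p = 1 / u - u" and "1 / u = cnj u"
    using roots(1) by (simp_all add: field_simps power2_eq_square mult.commute)
  then have "Re p = 0" and "norm p \<le> 2"
    using norm_triangle_ineq4[of "cnj u" u] u1 by simp_all
  with assms show False by simp
qed

lemma starlike_fun_z_div_one_minus_sq: "starlike_fun (\<lambda>z. z / (1 - z\<^sup>2))"
  unfolding starlike_fun_def
proof (intro conjI ballI subsetI)
  show "(\<lambda>z. z / (1 - z\<^sup>2)) holomorphic_on unit_disc"
    by (intro holomorphic_intros) (auto dest: one_minus_sq_nonzero)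
  show "inj_on (\<lambda>z. z / (1 - z\<^sup>2)) unit_disc"
  proof (rule inj_onI)
    fix z w :: complex
    assume z: "z \<in> unit_disc" and w: "w \<in> unit_disc" and "z / (1 - z\<^sup>2) = w / (1 - w\<^sup>2)"
    then have "z * (1 - w\<^sup>2) = w * (1 - z\<^sup>2)"
      using one_minus_sq_nonzero[of z] one_minus_sq_nonzero[of w] by (simp add: frac_eq_eq)
    then have "(z - w) * (1 + z * w) = 0" by (simp add: algebra_simps power2_eq_square)
    moreover have "norm (z * w) < 1"
      using z w mult_strict_mono[of "norm z" 1 "norm w" 1] by (simp add: norm_mult)
    then have "1 + z * w \<noteq> 0" by (metis add.inverse_unique norm_minus_cancel norm_one order.irrefl)
    ultimately show "z = w" by simp
  qed
  show "0 / (1 - 0\<^sup>2) = (0::complex)" by simp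
next
  fix w x
  assume "w \<in> (\<lambda>z. z / (1 - z\<^sup>2)) ` unit_disc" and "x \<in> closed_segment 0 w"
  then obtain z t where z: "norm z < 1" and t: "0 \<le> t" "t \<le> 1"
    and x: "x = of_real t * (z / (1 - z\<^sup>2))"
    by (auto simp: closed_segment_def scaleR_conv_of_real)
  show "x \<in> (\<lambda>z. z / (1 - z\<^sup>2)) ` unit_disc"
  proof (cases "t = 0 \<or> z = 0")
    case True
    then show ?thesis using x by (intro image_eqI[of _ _ 0]) auto
  next
    case False
    \<comment> \<open>solve \<open>u / (1 - u\<^sup>2) = x\<close>, i.e. \<open>u\<^sup>2 + p u = 1\<close> with \<open>p = 1 / x = (1 / z - z) / t\<close>\<close>
    define p where "p = (1 / z - z) / of_real t"
    have "Re p = 0 \<Longrightarrow> norm (1 / z - z) > 2"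
      using False z by (intro norm_inverse_minus_gt_two) (auto simp: p_def)
    moreover have "norm (1 / z - z) \<le> norm p"
      using False t by (simp add: p_def norm_divide le_divide_eq mult_left_le)
    ultimately have "Re p \<noteq> 0 \<or> norm p > 2" by linarith
    then obtain u where u: "norm u < 1" "u\<^sup>2 + p * u = 1"
      using quadratic_root_in_unit_disc by blast
    have "1 - u\<^sup>2 = p * u" and "u \<noteq> 0" using u(2) by (auto simp: algebra_simps)
    then have "u / (1 - u\<^sup>2) = 1 / p" by simp
    also have "\<dots> = x"
      using False one_minus_sq_nonzero[OF z] by (simp add: p_def x field_simps power2_eq_square)
    finally show ?thesis using u(1) by (intro image_eqI[of _ _ u]) auto
  qed
qed

lemma Gamma_real_plus1: "x > 0 \<Longrightarrow> Gamma (x + 1) = x * Gamma (x :: real)"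
  by (rule Gamma_plus1) (auto dest: nonpos_Ints_nonpos)

lemma Gamma_plus_half_sq_le:
  fixes x :: real
  assumes "x > 0"
  shows "(Gamma (x + 1/2))\<^sup>2 \<le> x * (Gamma x)\<^sup>2"
proof -
  have G: "Gamma x > 0" "Gamma x \<noteq> 0" using Gamma_real_pos[OF assms] by auto
  have "(1 - 1/2) *\<^sub>R x + (1/2) *\<^sub>R (x + 1) = x + 1/2" by (simp add: field_simps)
  then have "(ln \<circ> Gamma) (x + 1/2) \<le> (1 - 1/2) * (ln \<circ> Gamma) x + (1/2) * (ln \<circ> Gamma) (x + 1)"
    using convex_onD[OF log_convex_Gamma_real, of "1/2" x "x + 1"] assms by simp
  then have "ln (Gamma (x + 1/2)) \<le> ln (Gamma x) / 2 + (ln x + ln (Gamma x)) / 2"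
    using assms G by (simp add: Gamma_real_plus1 ln_mult)
  then have "2 * ln (Gamma (x + 1/2)) \<le> ln x + 2 * ln (Gamma x)" by (simp add: field_simps)
  then have "ln ((Gamma (x + 1/2))\<^sup>2) \<le> ln (x * (Gamma x)\<^sup>2)"
    using assms G by (simp add: ln_mult ln_realpow)
  moreover have "Gamma (x + 1/2) > 0" using assms by (intro Gamma_real_pos) simp
  ultimately show ?thesis using assms G by (simp add: ln_le_cancel_iff)
qed

lemma Gamma_three_halves_equation_imp_ge_19:
  fixes \<nu> :: real
  assumes "\<nu> > 0" and "sqrt pi * Gamma (\<nu> + 3/2) = 8 * Gamma (\<nu> + 1)"
  shows "\<nu> \<ge> 19"
proof -
  have "64 * (Gamma (\<nu> + 1))\<^sup>2 = pi * (Gamma (\<nu> + 3/2))\<^sup>2"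
    using arg_cong[OF assms(2), of power2] by (simp add: power_mult_distrib)
  also have "\<dots> \<le> pi * ((\<nu> + 1) * (Gamma (\<nu> + 1))\<^sup>2)"
    using Gamma_plus_half_sq_le[of "\<nu> + 1"] assms(1) by (simp add: add.assoc)
  finally have "64 * (Gamma (\<nu> + 1))\<^sup>2 \<le> (pi * (\<nu> + 1)) * (Gamma (\<nu> + 1))\<^sup>2"
    by (simp add: mult.assoc)
  then have "64 \<le> pi * (\<nu> + 1)"
    by (rule mult_right_le_imp_le) (use assms(1) in \<open>simp add: less_imp_neq[symmetric]\<close>)
  moreover have "pi * (\<nu> + 1) \<le> 3.2 * (\<nu> + 1)"
    using pi_approx assms(1) by (intro mult_right_mono) auto
  ultimately show ?thesis by simp
qed

lemma bs_coeff_0: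
  assumes "\<nu> > -1"
  shows "bs_coeff \<nu> 0 = 1"
proof -
  have "Gamma (\<nu> + 1) > 0" using assms by simp
  then show ?thesis by (simp add: bs_coeff_def Gamma_one_half_real)
qed

lemma bs_coeff_pos: "\<nu> > -1 \<Longrightarrow> bs_coeff \<nu> n > 0"
  unfolding bs_coeff_def by (auto intro!: divide_pos_pos mult_pos_pos Gamma_real_pos)

lemma bs_coeff_Suc_Suc:
  assumes "\<nu> > -1"
  shows "bs_coeff \<nu> (Suc (Suc n)) = bs_coeff \<nu> n / ((real n + 2) * (real n + 2 + 2 * \<nu>))"
proof -
  have "Gamma ((real (Suc (Suc n)) + 1) / 2) = (real n + 1) / 2 * Gamma ((real n + 1) / 2)"
    using Gamma_real_plus1[of "(real n + 1) / 2"] by (simp add: field_simps)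
  moreover have "Gamma (real (Suc (Suc n)) / 2 + \<nu> + 1) = (real n / 2 + \<nu> + 1) * Gamma (real n / 2 + \<nu> + 1)"
    using Gamma_real_plus1[of "real n / 2 + \<nu> + 1"] assms by (simp add: field_simps)
  moreover have "fact (Suc (Suc n)) = (real n + 2) * (real n + 1) * fact n"
    by (simp add: algebra_simps)
  moreover have "A * ((real n + 1) / 2 * G) / (s * ((real n + 2) * (real n + 1) * F) * ((real n / 2 + \<nu> + 1) * H))
      = A * G / (s * F * H) / ((real n + 2) * (real n + 2 + 2 * \<nu>))" for A G F H s :: real
  proof -
    have "b / 2 / (a * b * (c / 2)) = 1 / (a * c)" if "b > 0" "c > 0" for a b c :: real
      using that by (simp add: field_simps)
    from this[of "real n + 1" "real n + 2 + 2 * \<nu>" "real n + 2"] assms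
    have "(real n + 1) / 2 / ((real n + 2) * (real n + 1) * (real n / 2 + \<nu> + 1))
        = 1 / ((real n + 2) * (real n + 2 + 2 * \<nu>))"
      by (simp add: field_simps)
    then show ?thesis by (simp add: ac_simps)
  qed
  ultimately show ?thesis unfolding bs_coeff_def by (simp only:)
qed

lemma bs_coeff_1_sq_le:
  assumes "\<nu> > -1/2"
  shows "(bs_coeff \<nu> 1)\<^sup>2 \<le> 1 / (pi * (\<nu> + 1/2))"
proof -
  define A where "A = Gamma (\<nu> + 1)"
  define G where "G = Gamma (\<nu> + 1/2)"
  have pos: "A > 0" "G > 0" "\<nu> + 1/2 > 0" using assms by (auto simp: A_def G_def)
  have "bs_coeff \<nu> 1 = A / (sqrt pi * ((\<nu> + 1/2) * G))"
    using Gamma_real_plus1[of "\<nu> + 1/2"] assms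
    by (simp add: bs_coeff_def A_def G_def add_ac)
  then have "(bs_coeff \<nu> 1)\<^sup>2 = A\<^sup>2 / (pi * (\<nu> + 1/2)\<^sup>2 * G\<^sup>2)"
    by (simp add: power_divide power_mult_distrib)
  also have "\<dots> \<le> (\<nu> + 1/2) * G\<^sup>2 / (pi * (\<nu> + 1/2)\<^sup>2 * G\<^sup>2)"
    using Gamma_plus_half_sq_le[of "\<nu> + 1/2"] pos by (intro divide_right_mono) (simp_all add: A_def G_def add_ac)
  also have "\<dots> = 1 / (pi * (\<nu> + 1/2))"
  proof -
    have "c * g / (pi * c\<^sup>2 * g) = 1 / (pi * c)" if "c > 0" "g > 0" for c g :: real
      using that pi_gt_zero by (simp add: field_simps power2_eq_square)
    then show ?thesis using pos by simp
  qed
  finally show ?thesis .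
qed

lemma bs_coeff_1_le:
  assumes "\<nu> \<ge> 19"
  shows "bs_coeff \<nu> 1 \<le> 3/20"
proof (rule power2_le_imp_le)
  have "3 * 19 \<le> pi * (\<nu> + 1/2)"
    using pi_gt3 assms by (intro mult_mono) auto
  then have "1 / (pi * (\<nu> + 1/2)) \<le> (3/20)\<^sup>2"
    by (simp add: field_simps)
  then show "(bs_coeff \<nu> 1)\<^sup>2 \<le> (3/20)\<^sup>2"
    using bs_coeff_1_sq_le[of \<nu>] assms by simp
qed simp

lemma bs_coeff_weighted_le:
  assumes "\<nu> \<ge> 19" and "n \<ge> 1"
  shows "(real n + 1)\<^sup>2 * bs_coeff \<nu> n \<le> 12/5 * (1/4) ^ n"
  using assms(2)
  \<comment> \<open>\<open>12/5\<close> is dictated by \<open>n = 1\<close>; each double step gains \<open>(n+3)\<^sup>2/(n+1)\<^sup>2 / 123 \<le> 4/123 < 1/16\<close>\<close>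
proof (induction n rule: less_induct)
  case (less n)
  consider "n = 1" | "n = 2" | m where "n = Suc (Suc m)" "m \<ge> 1"
    using less.prems by (metis One_nat_def Suc_1 Suc_le_D le_Suc_eq nat.inject not_less_eq_eq)
  then show ?case
  proof cases
    case 1
    then show ?thesis using bs_coeff_1_le[OF assms(1)] by simp
  next
    case 2
    have "bs_coeff \<nu> 2 = 1 / (2 * (2 + 2 * \<nu>))"
      using bs_coeff_Suc_Suc[of \<nu> 0] bs_coeff_0[of \<nu>] assms(1) by (simp add: numeral_2_eq_2)
    also have "\<dots> \<le> 1/80" using assms(1) by (simp add: field_simps)
    finally show ?thesis using 2 by (simp add: power2_eq_square)
  next
    case 3
    then obtain m where n: "n = Suc (Suc m)" and m: "m \<ge> 1" by blast
    have b: "bs_coeff \<nu> m > 0" using bs_coeff_pos assms(1) by simp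
    have D: "123 \<le> (real m + 2) * (real m + 2 + 2 * \<nu>)"
      using m assms(1) mult_mono[of 3 "real m + 2" 41 "real m + 2 + 2 * \<nu>"] by simp
    have "(real m + 3)\<^sup>2 \<le> 4 * (real m + 1)\<^sup>2"
      using m mult_mono[of 1 "real m" 1 "real m"] by (simp add: power2_eq_square algebra_simps)
    have "(real n + 1)\<^sup>2 * bs_coeff \<nu> n = (real m + 3)\<^sup>2 * bs_coeff \<nu> m / ((real m + 2) * (real m + 2 + 2 * \<nu>))"
      using assms(1) by (simp add: n bs_coeff_Suc_Suc add_ac)
    also have "\<dots> \<le> (real m + 3)\<^sup>2 * bs_coeff \<nu> m / 123"
      using D b by (intro divide_left_mono) auto
    also have "\<dots> \<le> 4 / 123 * ((real m + 1)\<^sup>2 * bs_coeff \<nu> m)"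
      using \<open>(real m + 3)\<^sup>2 \<le> _\<close> b by (simp add: mult_right_mono)
    also have "\<dots> \<le> 4 / 123 * (12/5 * (1/4) ^ m)"
      using less.IH[of m] m n by (intro mult_left_mono) auto
    also have "\<dots> \<le> 12/5 * (1/4) ^ n"
      by (simp add: n)
    finally show ?thesis .
  qed
qed

lemma bs_coeff_weighted_summable_and_sum_lt_2:
  assumes "\<nu> \<ge> 19"
  shows "summable (\<lambda>n. (real n + 1)\<^sup>2 * bs_coeff \<nu> n)"
    and "(\<Sum>n. (real n + 1)\<^sup>2 * bs_coeff \<nu> n) < 2"
proof -
  define M :: "nat \<Rightarrow> real" where "M n = 12/5 * (1/4) ^ n - (if n = 0 then 7/5 else 0)" for n
  have "(\<lambda>n. (1/4 :: real) ^ n) sums (4/3)"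
    using geometric_sums[of "1/4 :: real"] by simp
  then have "M sums (12/5 * (4/3) - 7/5)"
    unfolding M_def by (intro sums_diff sums_mult sums_single)
  then have M: "M sums (9/5)" by simp
  have le: "(real n + 1)\<^sup>2 * bs_coeff \<nu> n \<le> M n" for n
  proof (cases "n = 0")
    case True
    then show ?thesis using bs_coeff_0[of \<nu>] assms by (simp add: M_def)
  next
    case False
    then show ?thesis using bs_coeff_weighted_le[OF assms, of n] by (simp add: M_def)
  qed
  have nonneg: "0 \<le> (real n + 1)\<^sup>2 * bs_coeff \<nu> n" for n
    using bs_coeff_pos[of \<nu> n] assms by simp
  show summable: "summable (\<lambda>n. (real n + 1)\<^sup>2 * bs_coeff \<nu> n)"
  proof (rule summable_comparison_test'[OF sums_summable[OF M]])
    show "norm ((real n + 1)\<^sup>2 * bs_coeff \<nu> n) \<le> M n" for n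
      using le[of n] nonneg[of n] by simp
  qed
  have "(\<Sum>n. (real n + 1)\<^sup>2 * bs_coeff \<nu> n) \<le> 9/5"
    using suminf_le[OF le summable sums_summable[OF M]] sums_unique[OF M, symmetric] by simp
  then show "(\<Sum>n. (real n + 1)\<^sup>2 * bs_coeff \<nu> n) < 2" by simp
qed

lemma has_field_derivative_mult_power_series:
  fixes c :: "nat \<Rightarrow> 'a::{real_normed_field,banach}"
  assumes "summable c" and "norm z < 1"
  shows "((\<lambda>z. z * (\<Sum>n. c n * z ^ n)) has_field_derivative (\<Sum>n. of_nat (Suc n) * c n * z ^ n)) (at z)"
proof -
  define a where "a n = (if n = 0 then 0 else c (n - 1))" for n
  have a_sums: "(\<lambda>n. a n * w ^ n) sums (w * (\<Sum>n. c n * w ^ n))" if "norm w < 1" for w :: 'a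
  proof -
    have "summable (\<lambda>n. c n * w ^ n)"
      using powser_inside[of c 1 w] assms(1) that by simp
    then have "(\<lambda>n. a (Suc n) * w ^ Suc n) sums (w * (\<Sum>n. c n * w ^ n))"
      unfolding a_def using sums_mult[OF summable_sums, of _ w] by (simp add: ac_simps)
    moreover have "a 0 * w ^ 0 = 0" by (simp add: a_def)
    ultimately show ?thesis using sums_Suc_iff[of "\<lambda>n. a n * w ^ n"] by simp
  qed
  have "summable (\<lambda>n. a n * w ^ n)" if "norm w < 1" for w
    using a_sums[OF that] by (rule sums_summable)
  from termdiffs_strong'[of 1 a, OF this assms(2)]
  have "((\<lambda>w. \<Sum>n. a n * w ^ n) has_field_derivative (\<Sum>n. diffs a n * z ^ n)) (at z)" .
  moreover have "diffs a = (\<lambda>n. of_nat (Suc n) * c n)"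
    by (simp add: diffs_def a_def)
  ultimately have "((\<lambda>w. \<Sum>n. a n * w ^ n) has_field_derivative (\<Sum>n. of_nat (Suc n) * c n * z ^ n)) (at z)"
    by simp
  then show ?thesis
    by (rule has_field_derivative_transform_within_open[of _ _ _ "ball 0 1"])
       (use assms(2) a_sums[THEN sums_unique] in auto)
qed

lemma ctc_quotient_z_div_one_minus_sq:
  assumes "norm z < 1"
  shows "ctc_quotient f (\<lambda>z. z / (1 - z\<^sup>2)) z = (1 - z\<^sup>2) * deriv f z"
proof (cases "z = 0")
  case True
  have "((\<lambda>z::complex. z / (1 - z\<^sup>2)) has_field_derivative 1) (at 0)"
    by (auto intro!: derivative_eq_intros)
  then show ?thesis using True by (simp add: ctc_quotient_def DERIV_imp_deriv)
next
  case False
  then show ?thesis using one_minus_sq_nonzero[OF assms] by (simp add: ctc_quotient_def)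
qed

lemma Re_one_minus_sq_mult_deriv_series_pos:
  fixes b :: "nat \<Rightarrow> real" and z :: complex
  assumes nonneg: "\<And>n. b n \<ge> 0" and summable: "summable (\<lambda>n. (real n + 1)\<^sup>2 * b n)"
    and small: "(\<Sum>n. (real n + 1)\<^sup>2 * b n) < 2 * b 0" and z: "norm z < 1"
  shows "Re ((1 - z\<^sup>2) * (\<Sum>n. of_nat (Suc n) * of_real (b n) * z ^ n)) > 0"
proof -
  define R where "R = Re (1 - z\<^sup>2)"
  define S where "S = (\<Sum>n. (real n + 1)\<^sup>2 * b n)"
  define t where "t n = Re ((1 - z\<^sup>2) * (of_nat (Suc n) * of_real (b n) * z ^ n))" for n
  have "(norm z)\<^sup>2 < 1" using z by (simp add: power_less_one_iff)
  then have "Re (z\<^sup>2) < 1"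
    using complex_Re_le_cmod[of "z\<^sup>2"] by (simp add: norm_power)
  then have R: "R > 0" by (simp add: R_def)
  have "summable (\<lambda>n. of_nat (Suc n) * of_real (b n) * z ^ n)"
  proof (rule summable_comparison_test'[OF summable])
    fix n
    have "norm (of_nat (Suc n) * of_real (b n) * z ^ n) = ((real n + 1) * b n) * norm z ^ n"
      using nonneg[of n] by (simp only: norm_mult norm_of_nat norm_of_real norm_power abs_of_nonneg) simp
    also have "\<dots> \<le> (real n + 1) * b n"
      using nonneg[of n] z by (intro mult_left_le power_le_one) auto
    also have "\<dots> \<le> (real n + 1)\<^sup>2 * b n"
      using nonneg[of n] by (intro mult_right_mono) (auto simp: power2_eq_square)
    finally show "norm (of_nat (Suc n) * of_real (b n) * z ^ n) \<le> (real n + 1)\<^sup>2 * b n" .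
  qed
  then have t_sums: "t sums Re ((1 - z\<^sup>2) * (\<Sum>n. of_nat (Suc n) * of_real (b n) * z ^ n))"
    unfolding t_def by (intro sums_Re sums_mult summable_sums)
  define e where "e n = (if n = 0 then 2 * b 0 * R else 0) - (real n + 1)\<^sup>2 * b n * R" for n
  have e_sums: "e sums (2 * b 0 * R - S * R)"
    unfolding e_def S_def by (intro sums_diff sums_single sums_mult2 summable_sums summable)
  have e_le: "e n \<le> t n" for n
  proof -
    have "(1 - z\<^sup>2) * (of_nat (Suc n) * of_real (b n) * z ^ n)
        = of_real ((real n + 1) * b n) * (z ^ n * (1 - z\<^sup>2))"
      by (simp add: algebra_simps)
    then have t_eq: "t n = (real n + 1) * b n * Re (z ^ n * (1 - z\<^sup>2))"
      by (simp only: t_def Re_complex_of_real times_complex.sel Im_complex_of_real mult_zero_left diff_zero)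
    show ?thesis
    proof (cases "n = 0")
      case True
      then show ?thesis using t_eq by (simp add: e_def R_def)
    next
      case False
      have "- ((real n + 1) * R) \<le> Re (z ^ n * (1 - z\<^sup>2))"
        using Re_power_mult_one_minus_sq_ge[of z n] z by (simp add: R_def)
      from mult_left_mono[OF this, of "(real n + 1) * b n"]
      have "- ((real n + 1)\<^sup>2 * b n * R) \<le> t n"
        using nonneg[of n] by (simp add: t_eq power2_eq_square algebra_simps)
      then show ?thesis using False by (simp add: e_def)
    qed
  qed
  have "0 < (2 * b 0 - S) * R" using small R by (simp add: S_def)
  also have "\<dots> \<le> Re ((1 - z\<^sup>2) * (\<Sum>n. of_nat (Suc n) * of_real (b n) * z ^ n))"
    using sums_le[OF e_le e_sums t_sums] by (simp add: algebra_simps)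
  finally show ?thesis .
qed

theorem theorem4:
  fixes \<nu>0 \<nu> :: real
  assumes "\<nu>0 > 0"
    and "sqrt pi * Gamma (\<nu>0 + 3/2) = 8 * Gamma (\<nu>0 + 1)"
    and "\<nu> \<ge> \<nu>0"
  shows "close_to_convex_wrt (\<lambda>z. z * bessel_struve_kernel \<nu> z) (\<lambda>z. z / (1 - z\<^sup>2))"
proof -
  have \<nu>: "\<nu> \<ge> 19" using Gamma_three_halves_equation_imp_ge_19[OF assms(1,2)] assms(3) by simp
  define b where "b = bs_coeff \<nu>"
  define F where "F z = z * bessel_struve_kernel \<nu> z" for z
  define D where "D z = (\<Sum>n. of_nat (Suc n) * complex_of_real (b n) * z ^ n)" for z
  have b_pos: "b n > 0" and b_0: "b 0 = 1" for n using \<nu> by (simp_all add: b_def bs_coeff_pos bs_coeff_0)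
  note weighted = bs_coeff_weighted_summable_and_sum_lt_2[OF \<nu>, folded b_def]
  have b_summable: "summable (\<lambda>n. complex_of_real (b n))"
  proof (rule summable_comparison_test'[OF weighted(1)])
    show "norm (complex_of_real (b n)) \<le> (real n + 1)\<^sup>2 * b n" for n
      using b_pos[of n] mult_right_mono[of 1 "(real n + 1)\<^sup>2" "b n"] by simp
  qed
  have "F = (\<lambda>z. z * (\<Sum>n. complex_of_real (b n) * z ^ n))"
    by (simp add: fun_eq_iff F_def b_def bessel_struve_kernel_def)
  then have F_deriv: "(F has_field_derivative D z) (at z)" if "norm z < 1" for z
    using has_field_derivative_mult_power_series[OF b_summable that] by (simp only: D_def)
  have "D 0 = 1" using b_0 by (simp add: D_def powser_zero)
  show ?thesis
    unfolding close_to_convex_wrt_def F_def[symmetric]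
  proof (intro conjI exI[where x=0] ballI)
    show "F holomorphic_on unit_disc"
      using F_deriv by (auto simp: holomorphic_on_open intro!: exI)
    show "deriv F 0 = 1" using F_deriv[of 0] \<open>D 0 = 1\<close> by (simp add: DERIV_imp_deriv)
    fix z :: complex
    assume "z \<in> unit_disc"
    then show "0 < Re (cis 0 * ctc_quotient F (\<lambda>z. z / (1 - z\<^sup>2)) z)"
      using Re_one_minus_sq_mult_deriv_series_pos[OF less_imp_le[OF b_pos] weighted(1)] weighted(2) b_0
        DERIV_imp_deriv[OF F_deriv]
      by (simp add: ctc_quotient_z_div_one_minus_sq D_def)
  qed (simp_all add: starlike_fun_z_div_one_minus_sq F_def)
qed

end
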